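(* For every integer $n\geq 2$, both $d(n)$ and $-\frac{d(n)}{n-1}$ are eigenvalues of the adjacency matrix of the permutation graph $P(n)$.
   Context: $d(n)$ is the number of derangements (fixed-point-free permutations) of $\{1,\dots,n\}$. The permutation graph $P(n)$ has vertex set $S(n)$, and $\pi,\sigma$ are adjacent iff $\pi(i)\neq\sigma(i)$ for all $i$. *)

theory Defs
  imports Complex_Main "HOL-Combinatorics.Permutations"
begin

definition perms :: "nat \<Rightarrow> (nat \<Rightarrow> nat) set" where
  "perms n = {p. p permutes {1..n}}"

definition derangements_count :: "nat \<Rightarrow> nat" where
  "derangements_count n = card {p \<in> perms n. \<forall>i\<in>{1..n}. p i \<noteq> i}"

definition perm_graph_adj :: "nat \<Rightarrow> (nat \<Rightarrow> nat) \<Rightarrow> (nat \<Rightarrow> nat) \<Rightarrow> real" where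
  "perm_graph_adj n p q = (if \<forall>i\<in>{1..n}. p i \<noteq> q i then 1 else 0)"

definition is_eigenvalue_on :: "'a set \<Rightarrow> ('a \<Rightarrow> 'a \<Rightarrow> real) \<Rightarrow> real \<Rightarrow> bool" where
  "is_eigenvalue_on I A lam \<longleftrightarrow>
     (\<exists>v :: 'a \<Rightarrow> real. (\<exists>i\<in>I. v i \<noteq> 0) \<and>
        (\<forall>i\<in>I. (\<Sum>j\<in>I. A i j * v j) = lam * v i))"

end

theory Submission
  imports Defs
begin

(* The adjacency relation of P(n) is invariant under left translation:
   q is adjacent to p iff q = p o r for a derangement r.  Hence summing the
   indicator of a condition on q(1) over the neighbours of p amounts to counting
   derangements r with a condition on p(r(1)).
   (1) With no condition every row sum is d(n): P(n) is d(n)-regular, so the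
       constant vector is an eigenvector for d(n).
   (2) Conjugating by the transposition (c c'), which fixes 1, shows that the
       number of derangements with r(1) = c does not depend on c in {2..n};
       so it equals d(n)/(n-1).  Consequently p has d(n)/(n-1) neighbours q
       with q(1) = b if p(1) <> b, and none otherwise.
   (3) For v(q) = [q(1) = 1] - [q(1) = 2] this gives (A v)(p) = -d(n)/(n-1) v(p),
       so -d(n)/(n-1) is an eigenvalue as well. *)

definition derangements :: "nat \<Rightarrow> (nat \<Rightarrow> nat) set" where
  "derangements n = {r \<in> perms n. \<forall>i\<in>{1..n}. r i \<noteq> i}"

lemma derangements_count_eq: "derangements_count n = card (derangements n)"
  by (simp add: derangements_count_def derangements_def)

lemma finite_perms: "finite (perms n)"
  unfolding perms_def by (rule finite_permutations) simp

lemma constant_row_sum_eigenvalue: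
  assumes "I \<noteq> {}" and "\<And>i. i \<in> I \<Longrightarrow> (\<Sum>j\<in>I. A i j) = k"
  shows "is_eigenvalue_on I A k"
  unfolding is_eigenvalue_on_def
  by (rule exI[of _ "\<lambda>_. 1"]) (use assms in auto)

(* Left translation by p maps the derangements bijectively onto the neighbours
   of p; we record the induced equality of cardinalities, refined by any
   condition Q on the image of 1. *)
lemma card_neighbours_with:
  assumes "p \<in> perms n"
  shows "card {q \<in> perms n. (\<forall>i\<in>{1..n}. p i \<noteq> q i) \<and> Q (q 1)}
       = card {r \<in> derangements n. Q (p (r 1))}"
proof -
  have p: "p permutes {1..n}" using assms by (simp add: perms_def)
  have "bij_betw (\<lambda>r. p \<circ> r) {r \<in> derangements n. Q (p (r 1))}
          {q \<in> perms n. (\<forall>i\<in>{1..n}. p i \<noteq> q i) \<and> Q (q 1)}"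
  proof (rule bij_betw_byWitness[where f'="\<lambda>q. inv p \<circ> q"])
    show "\<forall>r\<in>{r \<in> derangements n. Q (p (r 1))}. inv p \<circ> (p \<circ> r) = r"
      by (auto simp: fun_eq_iff permutes_inverses[OF p])
    show "\<forall>q\<in>{q \<in> perms n. (\<forall>i\<in>{1..n}. p i \<noteq> q i) \<and> Q (q 1)}. p \<circ> (inv p \<circ> q) = q"
      by (auto simp: fun_eq_iff permutes_inverses[OF p])
    show "(\<circ>) p ` {r \<in> derangements n. Q (p (r 1))}
        \<subseteq> {q \<in> perms n. (\<forall>i\<in>{1..n}. p i \<noteq> q i) \<and> Q (q 1)}"
      using p by (auto simp: derangements_def perms_def permutes_compose permutes_inj inj_eq)
    show "(\<lambda>q. inv p \<circ> q) ` {q \<in> perms n. (\<forall>i\<in>{1..n}. p i \<noteq> q i) \<and> Q (q 1)}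
        \<subseteq> {r \<in> derangements n. Q (p (r 1))}"
      using p by (auto simp: derangements_def perms_def permutes_compose permutes_inv
                             permutes_inverses permutes_inv_eq)
  qed
  then show ?thesis by (simp add: bij_betw_same_card)
qed

lemma adj_row_sum_indicator:
  assumes "p \<in> perms n"
  shows "(\<Sum>q\<in>perms n. perm_graph_adj n p q * of_bool (Q (q 1)))
       = real (card {r \<in> derangements n. Q (p (r 1))})"
proof -
  have "(\<Sum>q\<in>perms n. perm_graph_adj n p q * of_bool (Q (q 1)))
      = (\<Sum>q\<in>perms n. of_bool ((\<forall>i\<in>{1..n}. p i \<noteq> q i) \<and> Q (q 1)))"
    by (intro sum.cong) (auto simp: perm_graph_adj_def)
  also have "\<dots> = real (card {q \<in> perms n. (\<forall>i\<in>{1..n}. p i \<noteq> q i) \<and> Q (q 1)})"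
    using finite_perms by (simp add: Int_def)
  finally show ?thesis using card_neighbours_with[OF assms] by simp
qed

lemma adj_row_sum:
  assumes "p \<in> perms n"
  shows "(\<Sum>q\<in>perms n. perm_graph_adj n p q) = real (derangements_count n)"
  using adj_row_sum_indicator[OF assms, of "\<lambda>_. True"]
  by (simp add: derangements_count_eq)

(* Conjugation by the transposition (c c'), which fixes 1, carries the
   derangements with r(1) = c onto those with r(1) = c'. *)
lemma card_derangements_first_value_eq:
  assumes c: "c \<in> {2..n}" and c': "c' \<in> {2..n}"
  shows "card {r \<in> derangements n. r 1 = c} = card {r \<in> derangements n. r 1 = c'}"
proof -
  let ?t = "Transposition.transpose c c'"
  have t: "?t permutes {1..n}" using c c' by (intro permutes_swap_id) auto
  have t1: "?t 1 = 1" using c c' by (auto simp: transpose_def)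
  have conj: "?t \<circ> r \<circ> ?t \<in> derangements n" if r: "r \<in> derangements n" for r
  proof -
    have "?t \<circ> r \<circ> ?t permutes {1..n}"
      using r t by (auto simp: derangements_def perms_def intro!: permutes_compose)
    moreover have "?t (r (?t i)) \<noteq> i" if i: "i \<in> {1..n}" for i
    proof
      assume "?t (r (?t i)) = i"
      then have "r (?t i) = ?t i" by (metis transpose_involutory)
      moreover have "?t i \<in> {1..n}" using permutes_in_image[OF t] i by simp
      ultimately show False using r by (auto simp: derangements_def)
    qed
    ultimately show ?thesis by (auto simp: derangements_def perms_def)
  qed
  have "bij_betw (\<lambda>r. ?t \<circ> r \<circ> ?t) {r \<in> derangements n. r 1 = c} {r \<in> derangements n. r 1 = c'}"
    by (rule bij_betw_byWitness[where f'="\<lambda>r. ?t \<circ> r \<circ> ?t"])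
       (use conj t1 in \<open>auto simp: fun_eq_iff\<close>)
  then show ?thesis by (simp add: bij_betw_same_card)
qed

lemma card_derangements_first_value:
  assumes c: "c \<in> {2..n}"
  shows "real (card {r \<in> derangements n. r 1 = c}) = real (derangements_count n) / (real n - 1)"
proof -
  have n: "n \<ge> 2" using c by auto
  have first_value: "r 1 \<in> {2..n}" if r: "r \<in> derangements n" for r
  proof -
    have "r 1 \<in> {1..n}"
      using r n permutes_in_image[of r "{1..n}" 1] by (auto simp: derangements_def perms_def)
    moreover have "r 1 \<noteq> 1" using r n by (auto simp: derangements_def)
    ultimately show ?thesis by auto
  qed
  have fin: "finite (derangements n)"
    using finite_perms by (auto simp: derangements_def)
  have partition: "derangements n = (\<Union>c'\<in>{2..n}. {r \<in> derangements n. r 1 = c'})"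
    using first_value by auto
  have "card (derangements n) = (\<Sum>c'\<in>{2..n}. card {r \<in> derangements n. r 1 = c'})"
    by (subst partition, rule card_UN_disjoint) (use fin in auto)
  also have "\<dots> = (n - 1) * card {r \<in> derangements n. r 1 = c}"
    using card_derangements_first_value_eq[OF _ c] by simp
  finally show ?thesis
    using n by (simp add: derangements_count_eq of_nat_diff field_simps)
qed

lemma adj_row_sum_first_value:
  assumes p: "p \<in> perms n" and b: "b \<in> {1..n}"
  shows "(\<Sum>q\<in>perms n. perm_graph_adj n p q * of_bool (q 1 = b))
       = (if p 1 = b then 0 else real (derangements_count n) / (real n - 1))"
proof -
  have pp: "p permutes {1..n}" using p by (simp add: perms_def)
  have "(\<Sum>q\<in>perms n. perm_graph_adj n p q * of_bool (q 1 = b))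
      = real (card {r \<in> derangements n. r 1 = inv p b})"
  proof -
    have "{r \<in> derangements n. p (r 1) = b} = {r \<in> derangements n. r 1 = inv p b}"
      by (auto simp: permutes_inverses[OF pp])
    then show ?thesis using adj_row_sum_indicator[OF p, of "\<lambda>x. x = b"] by simp
  qed
  moreover have "inv p b \<in> {1..n}"
    using b permutes_in_image[OF permutes_inv[OF pp]] by simp
  moreover have "inv p b = 1 \<longleftrightarrow> p 1 = b" using permutes_inv_eq[OF pp] by auto
  moreover have "card {r \<in> derangements n. r 1 = 1} = 0"
  proof -
    have "{r \<in> derangements n. r 1 = 1} = {}" using b by (auto simp: derangements_def)
    then show ?thesis by (simp only: card.empty)
  qed
  ultimately show ?thesis
    using card_derangements_first_value[of "inv p b" n] by (cases "p 1 = b") auto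
qed

theorem lemma7:
  fixes n :: nat
  assumes "n \<ge> 2"
  shows "is_eigenvalue_on (perms n) (perm_graph_adj n) (real (derangements_count n))
       \<and> is_eigenvalue_on (perms n) (perm_graph_adj n)
            (- real (derangements_count n) / (real n - 1))"
proof
  have id: "id \<in> perms n" by (simp add: perms_def permutes_id)
  then show "is_eigenvalue_on (perms n) (perm_graph_adj n) (real (derangements_count n))"
    by (intro constant_row_sum_eigenvalue adj_row_sum) auto
  define v :: "(nat \<Rightarrow> nat) \<Rightarrow> real" where "v q = of_bool (q 1 = 1) - of_bool (q 1 = 2)" for q
  have "(\<Sum>q\<in>perms n. perm_graph_adj n p q * v q) = - real (derangements_count n) / (real n - 1) * v p"
    if p: "p \<in> perms n" for p
  proof -
    let ?d = "real (derangements_count n) / (real n - 1)"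
    have "(\<Sum>q\<in>perms n. perm_graph_adj n p q * v q)
        = (\<Sum>q\<in>perms n. perm_graph_adj n p q * of_bool (q 1 = 1))
          - (\<Sum>q\<in>perms n. perm_graph_adj n p q * of_bool (q 1 = 2))"
      by (simp add: v_def right_diff_distrib sum_subtractf)
    also have "\<dots> = (if p 1 = 1 then 0 else ?d) - (if p 1 = 2 then 0 else ?d)"
      using adj_row_sum_first_value[OF p, of 1] adj_row_sum_first_value[OF p, of 2] assms
      by simp
    also have "\<dots> = - ?d * v p" by (auto simp: v_def)
    finally show ?thesis by simp
  qed
  moreover have "v id \<noteq> 0" by (simp add: v_def)
  ultimately show "is_eigenvalue_on (perms n) (perm_graph_adj n) (- real (derangements_count n) / (real n - 1))"
    unfolding is_eigenvalue_on_def using id by blast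
qed

end
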